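(* Let $(\mathcal{F},\varphi,x)$ be a Shintani datum and $(a_0,\dots,a_r,b_1,\dots,b_{r+1})$ a compatible system for it. Then \[ \varphi(a_0)-\partial_v(b_1)\in D, \] where $\varphi(a_0)-\partial_v(b_1)\in R_{0,r}=\mathbb{Z}[N_F]$.
   Context: Let $F$ be a totally real number field, $S$ a finite set of places containing the archimedean places, $V=\{v_1,\dots,v_r\}\subsetneq S$ with a fixed order $v_1<\dots<v_r$. For $v\in S$ fix open subgroups $J_v\subset F_v^\times$; for finite $v\notin S$ put $J_v=O_v^\times$. Put $N_v=F_v^\times/J_v$, $N_F=\mathbb{A}_F^\times/\prod_vJ_v$ (containing each $N_v$); $F^\times$ acts via the diagonal map $F^\times\to N_F$. Unadorned $\otimes$ is $\otimes_{\mathbb{Z}[F^\times]}$; for an $F^\times$-module $M$, $IM=\ker(M\to\mathbb{Z}\otimes M)$. For an abelian group $A$ and subgroup $U$, $I_{U,A}=\ker(\mathbb{Z}[A]\to\mathbb{Z}[A/U])$; $D=\prod_{v\in V}I_{N_v,N_F}\subset\mathbb{Z}[N_F]$ (product of ideals). $\mathbf{Sub}(V)$: subsets of $V$ with inclusions. For a functor $\mathcal{F}:\mathbf{Sub}(V)^{op}\to(\mathbb{Z}[F^\times]\text{-modules})$ and $U\subset W$, $r^W_U$ is the induced map. $R(W)=\mathbb{Z}[N_F/\prod_{v\in V\setminus W}N_v]$ with natural projections (so $R(V)=\mathbb{Z}[N_F]$). A Shintani datum is $(\mathcal{F},\varphi,x)$ with $\mathcal{F}$ such a functor, $\varphi:\mathcal{F}\to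 R$ a natural transformation, $x\in\mathcal{F}(V)/I\mathcal{F}(V)$, such that (i) $H_i(F^\times,\mathcal{F}(W))=0$ for $i>0$, $W\subset V$; (ii) $r^V_W(\bar x)\in I\mathcal{F}(W)$ for all $W\subsetneq V$ ($\bar x$ a lift of $x$). For a functor $\mathcal{G}$ (e.g. $\mathcal{F}$ or $R$) put $\mathcal{G}(k)=\bigoplus_{\#W=k}\mathcal{G}(W)$ and $\partial(y)=\sum_{i=1}^k(-1)^{i-1}r^W_{W\setminus\{w_i\}}(y)$ for $y\in\mathcal{G}(W)$, $W=\{w_1<\dots<w_k\}$. Fix a free resolution $\cdots\to\mathcal{I}_1\to\mathcal{I}_0\to\mathbb{Z}\to0$ by free $\mathbb{Z}[F^\times]$-modules with $\mathcal{I}_0=\mathbb{Z}[F^\times]$ and the augmentation map (so $\mathcal{I}_0\otimes M=M$). Put $\mathcal{F}_{i,j}=\mathcal{I}_i\otimes\mathcal{F}(j)$, $R_{i,j}=\mathcal{I}_i\otimes R(j)$, $\partial_v$ induced by the resolution, $\partial_h=\mathrm{id}\otimes\partial$, $\varphi=\mathrm{id}\otimes\varphi$. A compatible system for $(\mathcal{F},\varphi,x)$ is $(a_0,\dots,a_r,b_1,\dots,b_{r+1})$ with $a_j\in\mathcal{F}_{j,r-j}$, $b_j\in R_{j,r-j+1}$, such that $a_0\in\mathcal{F}(V)$ lifts $x$, $\partial_v(a_{j+1})=\partial_h(a_j)$ ($0\le j\le r-1$), and $\partial_h(b_j)=\varphi(a_j)-\partial_v(b_{j+1})$ ($1\le j\le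 r$). *)

theory Defs
  imports Main "HOL-Library.Poly_Mapping" "HOL-Library.Function_Algebras"
begin

(* The group F^x is an abelian
group type 'g (written additively), N_F is an abelian group type 'n (written additively),
the places are natural numbers ordered by the usual order, V is a finite set of places,
N v (v in V) are the subgroups N_v of N_F, delta is the diagonal map F^x to N_F.
Group rings Z[A] are finitely supported functions A to int (poly_mapping), whose
multiplication is the convolution product. *)

definition zsc :: "int \<Rightarrow> 'x::ab_group_add \<Rightarrow> 'x" where
  "zsc k x = (if 0 \<le> k then (\<Sum>i<nat k. x) else - (\<Sum>i<nat (-k). x))"

definition gsmul :: "('g \<Rightarrow> 'x \<Rightarrow> 'x) \<Rightarrow> ('g \<Rightarrow>\<^sub>0 int) \<Rightarrow> 'x::ab_group_add \<Rightarrow> 'x" where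
  "gsmul act c x = (\<Sum>g\<in>Poly_Mapping.keys c. zsc (Poly_Mapping.lookup c g) (act g x))"

definition ringact :: "'g::monoid_add \<Rightarrow> ('g \<Rightarrow>\<^sub>0 int) \<Rightarrow> ('g \<Rightarrow>\<^sub>0 int)" where
  "ringact g c = Poly_Mapping.single g 1 * c"

definition augm :: "('g \<Rightarrow>\<^sub>0 int) \<Rightarrow> int" where
  "augm c = (\<Sum>g\<in>Poly_Mapping.keys c. Poly_Mapping.lookup c g)"

definition is_gmod :: "('g::ab_group_add \<Rightarrow> 'x \<Rightarrow> 'x) \<Rightarrow> 'x::ab_group_add set \<Rightarrow> bool" where
  "is_gmod act M \<longleftrightarrow> 0 \<in> M \<and> (\<forall>x\<in>M. \<forall>y\<in>M. x + y \<in> M) \<and> (\<forall>x\<in>M. - x \<in> M)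
     \<and> (\<forall>g. \<forall>x\<in>M. act g x \<in> M) \<and> (\<forall>x\<in>M. act 0 x = x)
     \<and> (\<forall>g h. \<forall>x\<in>M. act (g + h) x = act g (act h x))
     \<and> (\<forall>g. \<forall>x\<in>M. \<forall>y\<in>M. act g (x + y) = act g x + act g y)"

definition is_glin :: "('g \<Rightarrow> 'x \<Rightarrow> 'x) \<Rightarrow> 'x::ab_group_add set \<Rightarrow> ('g \<Rightarrow> 'y \<Rightarrow> 'y)
    \<Rightarrow> 'y::ab_group_add set \<Rightarrow> ('x \<Rightarrow> 'y) \<Rightarrow> bool" where
  "is_glin act1 M1 act2 M2 f \<longleftrightarrow> (\<forall>x\<in>M1. f x \<in> M2) \<and> (\<forall>x\<in>M1. \<forall>y\<in>M1. f (x + y) = f x + f y)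
     \<and> (\<forall>g. \<forall>x\<in>M1. f (act1 g x) = act2 g (f x))"

(* IM = ker(M \<rightarrow> Z \<otimes> M), i.e. the subgroup generated by the elements g m - m. *)
definition Iaug :: "('g \<Rightarrow> 'x \<Rightarrow> 'x) \<Rightarrow> 'x::ab_group_add set \<Rightarrow> 'x set" where
  "Iaug act M = {x. \<exists>(n::nat) g m. (\<forall>i<n. m i \<in> M) \<and> x = (\<Sum>i<n. act (g i) (m i) - m i)}"

(* For a free Z[G]-module I with basis B, I \<otimes>_{Z[G]} M is identified with the finitely
supported functions B \<rightarrow> M. *)
definition tens :: "'b set \<Rightarrow> 'x::zero set \<Rightarrow> ('b \<Rightarrow> 'x) set" where
  "tens B M = {y. (\<forall>e. y e \<in> M) \<and> (\<forall>e. e \<notin> B \<longrightarrow> y e = 0) \<and> finite {e. y e \<noteq> 0}}"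

(* Boundary of the resolution, given by the matrix d (d e e' = coefficient of the
basis element e' in the boundary of the basis element e), tensored with M. *)
definition dv :: "('g \<Rightarrow> 'x \<Rightarrow> 'x) \<Rightarrow> 'b set \<Rightarrow> ('b \<Rightarrow> 'b \<Rightarrow> ('g \<Rightarrow>\<^sub>0 int))
    \<Rightarrow> ('b \<Rightarrow> 'x::ab_group_add) \<Rightarrow> ('b \<Rightarrow> 'x)" where
  "dv act B d y = (\<lambda>e'. \<Sum>e\<in>{e\<in>B. y e \<noteq> 0}. gsmul act (d e e') (y e))"

(* A free resolution ... \<rightarrow> I_1 \<rightarrow> I_0 = Z[G] \<rightarrow> Z \<rightarrow> 0, I_i free with basis Bas i,
boundary I_(i+1) \<rightarrow> I_i given by the matrix d i. *)

definition free_resolution :: "(nat \<Rightarrow> 'b set) \<Rightarrow> (nat \<Rightarrow> 'b \<Rightarrow> 'b \<Rightarrow> ('g::ab_group_add \<Rightarrow>\<^sub>0 int))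
    \<Rightarrow> 'b \<Rightarrow> bool" where
  "free_resolution Bas d e0 \<longleftrightarrow> Bas 0 = {e0}
     \<and> (\<forall>i. \<forall>e\<in>Bas (Suc i). finite {e'. d i e e' \<noteq> 0} \<and> (\<forall>e'. d i e e' \<noteq> 0 \<longrightarrow> e' \<in> Bas i))
     \<and> (\<forall>y\<in>tens (Bas 0) UNIV. augm (y e0) = 0 \<longleftrightarrow>
          (\<exists>z\<in>tens (Bas 1) UNIV. dv ringact (Bas 1) (d 0) z = y))
     \<and> (\<forall>i. \<forall>y\<in>tens (Bas (Suc i)) UNIV. dv ringact (Bas (Suc i)) (d i) y = (\<lambda>_. 0) \<longleftrightarrow>
          (\<exists>z\<in>tens (Bas (Suc (Suc i))) UNIV. dv ringact (Bas (Suc (Suc i))) (d (Suc i)) z = y))"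

(* G(k) = direct sum of G(W) over W \<subseteq> V with #W = k, as functions on subsets. *)
definition dsumk :: "nat set \<Rightarrow> (nat set \<Rightarrow> 'x::zero set) \<Rightarrow> nat \<Rightarrow> (nat set \<Rightarrow> 'x) set" where
  "dsumk V C k = {y. \<forall>W. (W \<subseteq> V \<and> card W = k \<longrightarrow> y W \<in> C W) \<and> (\<not> (W \<subseteq> V \<and> card W = k) \<longrightarrow> y W = 0)}"

definition pact :: "('g \<Rightarrow> 'x \<Rightarrow> 'x) \<Rightarrow> 'g \<Rightarrow> (nat set \<Rightarrow> 'x) \<Rightarrow> (nat set \<Rightarrow> 'x)" where
  "pact act g y = (\<lambda>W. act g (y W))"

(* The map \<partial>: G(k) \<rightarrow> G(k-1), with sign (-1)^(i-1) for w = w_i the i-th element of W. *)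
definition hdiff :: "nat set \<Rightarrow> (nat set \<Rightarrow> nat set \<Rightarrow> 'x \<Rightarrow> 'x) \<Rightarrow> (nat set \<Rightarrow> 'x::ab_group_add)
    \<Rightarrow> (nat set \<Rightarrow> 'x)" where
  "hdiff V res y = (\<lambda>U. if U \<subseteq> V then
      (\<Sum>w\<in>V - U. zsc ((-1) ^ card {u\<in>U. u < w}) (res (insert w U) U (y (insert w U)))) else 0)"

definition phik :: "nat set \<Rightarrow> (nat set \<Rightarrow> 'x \<Rightarrow> 'y) \<Rightarrow> (nat set \<Rightarrow> 'x) \<Rightarrow> (nat set \<Rightarrow> 'y::zero)" where
  "phik V phi y = (\<lambda>W. if W \<subseteq> V then phi W (y W) else 0)"

definition Hsub :: "(nat \<Rightarrow> 'n::ab_group_add set) \<Rightarrow> nat set \<Rightarrow> nat set \<Rightarrow> 'n set" where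
  "Hsub N V W = {x. \<exists>n. (\<forall>v\<in>V - W. n v \<in> N v) \<and> x = (\<Sum>v\<in>V - W. n v)}"

definition cplus :: "'n::ab_group_add set \<Rightarrow> 'n set \<Rightarrow> 'n set" where
  "cplus C H = {c + h | c h. c \<in> C \<and> h \<in> H}"

(* Z[N_F/H] is represented by finitely supported functions on cosets of H (elements of
type 'n set \<Rightarrow>\<^sub>0 int whose Poly_Mapping.keys are cosets of H). *)
definition Rc :: "(nat \<Rightarrow> 'n::ab_group_add set) \<Rightarrow> nat set \<Rightarrow> nat set \<Rightarrow> ('n set \<Rightarrow>\<^sub>0 int) set" where
  "Rc N V W = {f. \<forall>C\<in>Poly_Mapping.keys f. \<exists>a. C = cplus {a} (Hsub N V W)}"

definition pz :: "'n::ab_group_add set \<Rightarrow> ('n \<Rightarrow>\<^sub>0 int) \<Rightarrow> ('n set \<Rightarrow>\<^sub>0 int)" where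
  "pz H f = (\<Sum>a\<in>Poly_Mapping.keys f. Poly_Mapping.single (cplus {a} H) (Poly_Mapping.lookup f a))"

definition projc :: "'n::ab_group_add set \<Rightarrow> ('n set \<Rightarrow>\<^sub>0 int) \<Rightarrow> ('n set \<Rightarrow>\<^sub>0 int)" where
  "projc H f = (\<Sum>C\<in>Poly_Mapping.keys f. Poly_Mapping.single (cplus C H) (Poly_Mapping.lookup f C))"

definition resR :: "(nat \<Rightarrow> 'n::ab_group_add set) \<Rightarrow> nat set \<Rightarrow> nat set \<Rightarrow> nat set
    \<Rightarrow> ('n set \<Rightarrow>\<^sub>0 int) \<Rightarrow> ('n set \<Rightarrow>\<^sub>0 int)" where
  "resR N V W U f = projc (Hsub N V U) f"

definition actR :: "('g \<Rightarrow> 'n::ab_group_add) \<Rightarrow> 'g \<Rightarrow> ('n set \<Rightarrow>\<^sub>0 int) \<Rightarrow> ('n set \<Rightarrow>\<^sub>0 int)" where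
  "actR delta g f = (\<Sum>C\<in>Poly_Mapping.keys f. Poly_Mapping.single ((\<lambda>x. x + delta g) ` C) (Poly_Mapping.lookup f C))"

(* The identification Z[N_F] = R(V). *)
definition emb :: "('n::ab_group_add \<Rightarrow>\<^sub>0 int) \<Rightarrow> ('n set \<Rightarrow>\<^sub>0 int)" where
  "emb f = pz {0} f"

definition Iker :: "'n::ab_group_add set \<Rightarrow> ('n \<Rightarrow>\<^sub>0 int) set" where
  "Iker H = {f. pz H f = 0}"

definition ideal_mult :: "'a::semiring_0 set \<Rightarrow> 'a set \<Rightarrow> 'a set" where
  "ideal_mult I J = {x. \<exists>(n::nat) (p::nat \<Rightarrow> 'a) q. (\<forall>i<n. p i \<in> I \<and> q i \<in> J) \<and> x = (\<Sum>i<n. p i * q i)}"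

(* D = the product of the ideals I(N_v,N_F), v in V (product of ideals; the empty product is the unit ideal). *)
definition Dideal :: "(nat \<Rightarrow> 'n::ab_group_add set) \<Rightarrow> nat set \<Rightarrow> ('n \<Rightarrow>\<^sub>0 int) set" where
  "Dideal N V = foldr (\<lambda>v J. ideal_mult (Iker (N v)) J) (sorted_list_of_set V) UNIV"

definition setting_ok :: "nat set \<Rightarrow> (nat \<Rightarrow> 'n::ab_group_add set) \<Rightarrow> ('g::ab_group_add \<Rightarrow> 'n) \<Rightarrow> bool" where
  "setting_ok V N delta \<longleftrightarrow> finite V
     \<and> (\<forall>x y. delta (x + y) = delta x + delta y)
     \<and> (\<forall>v\<in>V. 0 \<in> N v \<and> (\<forall>x\<in>N v. \<forall>y\<in>N v. x + y \<in> N v) \<and> (\<forall>x\<in>N v. - x \<in> N v))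
     \<and> (\<forall>n. (\<forall>v\<in>V. n v \<in> N v) \<and> (\<Sum>v\<in>V. n v) = 0 \<longrightarrow> (\<forall>v\<in>V. n v = 0))"

definition functor_ok :: "nat set \<Rightarrow> ('g::ab_group_add \<Rightarrow> 'm \<Rightarrow> 'm) \<Rightarrow> (nat set \<Rightarrow> 'm::ab_group_add set)
    \<Rightarrow> (nat set \<Rightarrow> nat set \<Rightarrow> 'm \<Rightarrow> 'm) \<Rightarrow> bool" where
  "functor_ok V act Fc res \<longleftrightarrow> (\<forall>W. W \<subseteq> V \<longrightarrow> is_gmod act (Fc W))
     \<and> (\<forall>U W. U \<subseteq> W \<and> W \<subseteq> V \<longrightarrow> is_glin act (Fc W) act (Fc U) (res W U))
     \<and> (\<forall>W. W \<subseteq> V \<longrightarrow> (\<forall>y\<in>Fc W. res W W y = y))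
     \<and> (\<forall>U W X. U \<subseteq> W \<and> W \<subseteq> X \<and> X \<subseteq> V \<longrightarrow> (\<forall>y\<in>Fc X. res W U (res X W y) = res X U y))"

definition nat_trans_ok :: "nat set \<Rightarrow> (nat \<Rightarrow> 'n::ab_group_add set) \<Rightarrow> ('g::ab_group_add \<Rightarrow> 'n)
    \<Rightarrow> ('g \<Rightarrow> 'm \<Rightarrow> 'm) \<Rightarrow> (nat set \<Rightarrow> 'm::ab_group_add set) \<Rightarrow> (nat set \<Rightarrow> nat set \<Rightarrow> 'm \<Rightarrow> 'm)
    \<Rightarrow> (nat set \<Rightarrow> 'm \<Rightarrow> ('n set \<Rightarrow>\<^sub>0 int)) \<Rightarrow> bool" where
  "nat_trans_ok V N delta act Fc res phi \<longleftrightarrow>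
     (\<forall>W. W \<subseteq> V \<longrightarrow> is_glin act (Fc W) (actR delta) (Rc N V W) (phi W))
     \<and> (\<forall>U W. U \<subseteq> W \<and> W \<subseteq> V \<longrightarrow> (\<forall>y\<in>Fc W. phi U (res W U y) = resR N V W U (phi W y)))"

(* Shintani datum (F, phi, x), where x is the class of xbar \<in> F(V) modulo I F(V);
H_i(F^x, M) is computed with the fixed resolution. *)
definition shintani_datum :: "nat set \<Rightarrow> (nat \<Rightarrow> 'n::ab_group_add set) \<Rightarrow> ('g::ab_group_add \<Rightarrow> 'n)
    \<Rightarrow> (nat \<Rightarrow> 'b set) \<Rightarrow> (nat \<Rightarrow> 'b \<Rightarrow> 'b \<Rightarrow> ('g \<Rightarrow>\<^sub>0 int))
    \<Rightarrow> ('g \<Rightarrow> 'm \<Rightarrow> 'm) \<Rightarrow> (nat set \<Rightarrow> 'm::ab_group_add set) \<Rightarrow> (nat set \<Rightarrow> nat set \<Rightarrow> 'm \<Rightarrow> 'm)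
    \<Rightarrow> (nat set \<Rightarrow> 'm \<Rightarrow> ('n set \<Rightarrow>\<^sub>0 int)) \<Rightarrow> 'm \<Rightarrow> bool" where
  "shintani_datum V N delta Bas d act Fc res phi xbar \<longleftrightarrow>
     functor_ok V act Fc res \<and> nat_trans_ok V N delta act Fc res phi \<and> xbar \<in> Fc V
     \<and> (\<forall>W i. W \<subseteq> V \<and> 1 \<le> i \<longrightarrow> (\<forall>y\<in>tens (Bas i) (Fc W). dv act (Bas i) (d (i - 1)) y = (\<lambda>_. 0) \<longrightarrow>
            (\<exists>z\<in>tens (Bas (Suc i)) (Fc W). dv act (Bas (Suc i)) (d i) z = y)))
     \<and> (\<forall>W. W \<subset> V \<longrightarrow> res V W xbar \<in> Iaug act (Fc W))"

(* Compatible system (a_0..a_r, b_1..b_{r+1}), r = #V; a j \<in> F_{j,r-j}, b j \<in> R_{j,r-j+1}. *)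
definition compatible_system :: "nat set \<Rightarrow> (nat \<Rightarrow> 'n::ab_group_add set) \<Rightarrow> ('g::ab_group_add \<Rightarrow> 'n)
    \<Rightarrow> (nat \<Rightarrow> 'b set) \<Rightarrow> (nat \<Rightarrow> 'b \<Rightarrow> 'b \<Rightarrow> ('g \<Rightarrow>\<^sub>0 int)) \<Rightarrow> 'b
    \<Rightarrow> ('g \<Rightarrow> 'm \<Rightarrow> 'm) \<Rightarrow> (nat set \<Rightarrow> 'm::ab_group_add set) \<Rightarrow> (nat set \<Rightarrow> nat set \<Rightarrow> 'm \<Rightarrow> 'm)
    \<Rightarrow> (nat set \<Rightarrow> 'm \<Rightarrow> ('n set \<Rightarrow>\<^sub>0 int)) \<Rightarrow> 'm
    \<Rightarrow> (nat \<Rightarrow> 'b \<Rightarrow> nat set \<Rightarrow> 'm) \<Rightarrow> (nat \<Rightarrow> 'b \<Rightarrow> nat set \<Rightarrow> ('n set \<Rightarrow>\<^sub>0 int)) \<Rightarrow> bool" where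
  "compatible_system V N delta Bas d e0 act Fc res phi xbar a b \<longleftrightarrow>
     (let r = card V in
       (\<forall>j\<le>r. a j \<in> tens (Bas j) (dsumk V Fc (r - j)))
     \<and> (\<forall>j. 1 \<le> j \<and> j \<le> r + 1 \<longrightarrow> b j \<in> tens (Bas j) (dsumk V (Rc N V) (r + 1 - j)))
     \<and> a 0 e0 V - xbar \<in> Iaug act (Fc V)
     \<and> (\<forall>j<r. dv (pact act) (Bas (Suc j)) (d j) (a (Suc j)) = (\<lambda>e. hdiff V res (a j e)))
     \<and> (\<forall>j. 1 \<le> j \<and> j \<le> r \<longrightarrow>
          (\<lambda>e. hdiff V (resR N V) (b j e))
            = (\<lambda>e W. phik V phi (a j e) W - dv (pact (actR delta)) (Bas (Suc j)) (d j) (b (Suc j)) e W)))"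

end

theory Submission
  imports Defs
begin

text \<open>
  Let z = phi(a_0) - d_v(b_1), an element of Z[N_F]. Fix v in V and put W = V - {v}. In the
  projection to Z[N_F/N_v] = R(W), naturality of phi turns the image of phi(a_0) into
  phi(r(a_0)), and the compatibility relations at W express r(a_0) through a_1 and the image of
  b_1 through phi(a_1) and b_2. Up to the sign of v in V, what remains is the image of
  d_v d_v (b_2), which vanishes because the resolution is a complex. So z lies in the kernel
  I(N_v, N_F) of every projection.

  Since the N_v are independent subgroups of N_F, the intersection of these kernels is their
  product D: splitting off the N_v-component u(a) of every a in N_F writes an element f of the
  intersection as a sum of ([u] - 1) g_u with g_u in the remaining kernels, and induction over V
  concludes.
\<close>

section \<open>Integer multiples\<close>

lemma zsc_closed:
  assumes "0 \<in> M" "\<And>x y. x \<in> M \<Longrightarrow> y \<in> M \<Longrightarrow> x + y \<in> M" "\<And>x. x \<in> M \<Longrightarrow> - x \<in> M" "x \<in> M"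
  shows "zsc k x \<in> M"
proof -
  have "(\<Sum>i<n. x) \<in> M" for n :: nat by (induction n) (auto intro: assms)
  then show ?thesis unfolding zsc_def using assms by auto
qed

lemma zsc_additive:
  assumes "0 \<in> M" "\<And>x y. x \<in> M \<Longrightarrow> y \<in> M \<Longrightarrow> x + y \<in> M" "\<And>x. x \<in> M \<Longrightarrow> - x \<in> M" "x \<in> M"
    and additive: "\<And>x y. x \<in> M \<Longrightarrow> y \<in> M \<Longrightarrow> F (x + y) = F x + F y"
  shows "F (zsc k x) = zsc k (F x)"
proof -
  have multiple_in: "(\<Sum>i<n. x) \<in> M" for n :: nat by (induction n) (auto intro: assms)
  have F0: "F 0 = 0" using additive[of 0 0] assms(1) by simp
  have F_minus: "F (- y) = - F y" if "y \<in> M" for y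
    using additive[of y "- y"] that assms(3) F0 by (simp add: add.commute eq_neg_iff_add_eq_0)
  have "F (\<Sum>i<n. x) = (\<Sum>i<n. F x)" for n :: nat
    by (induction n) (simp_all add: F0 additive multiple_in assms(4))
  then show ?thesis unfolding zsc_def using F_minus multiple_in by auto
qed

lemma zsc_additive_UNIV:
  assumes "\<And>x y. F (x + y) = F x + F y"
  shows "F (zsc k x) = zsc k (F x)"
  by (rule zsc_additive[where M = UNIV]) (simp_all add: assms)

lemma zsc_0_left [simp]: "zsc 0 x = 0"
  by (simp add: zsc_def)

lemma zsc_1_left [simp]: "zsc 1 x = x"
  by (simp add: zsc_def)

lemma zsc_succ: "zsc (k + 1) x = zsc k x + x"
proof (cases "0 \<le> k")
  case True
  then have "nat (k + 1) = Suc (nat k)" by simp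
  with True show ?thesis by (simp add: zsc_def)
next
  case False
  show ?thesis
  proof (cases "k = -1")
    case False
    with \<open>\<not> 0 \<le> k\<close> have "nat (- k) = Suc (nat (- (k + 1)))" by simp
    with \<open>\<not> 0 \<le> k\<close> False show ?thesis by (simp add: zsc_def)
  qed (simp add: zsc_def)
qed

lemma zsc_add: "zsc (k + l) x = zsc k x + zsc l x"
proof (induction l rule: int_induct[where k = 0])
  case base
  then show ?case by simp
next
  case (step1 i)
  then show ?case by (metis add.assoc zsc_succ)
next
  case (step2 i)
  then show ?case using zsc_succ[of "k + (i - 1)" x] zsc_succ[of "i - 1" x]
    by (simp add: algebra_simps)
qed

lemma zsc_add_right: "zsc k (x + y) = zsc k x + zsc k (y :: 'a::ab_group_add)"
  by (simp add: zsc_def sum.distrib)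

lemma zsc_zero_right [simp]: "zsc k (0 :: 'a::ab_group_add) = 0"
  by (simp add: zsc_def)

lemma zsc_sign [simp]: "zsc ((-1) ^ n) x = (if even n then x else - x)"
  by (simp add: zsc_def)

lemma zsc_eq_frag_cmul: "zsc k p = frag_cmul k p"
proof (rule poly_mapping_eqI)
  fix x
  have "Poly_Mapping.lookup (zsc k p) x = zsc k (Poly_Mapping.lookup p x)"
    by (rule zsc_additive_UNIV) (simp add: lookup_add)
  also have "\<dots> = k * Poly_Mapping.lookup p x"
    by (auto simp: zsc_def)
  finally show "Poly_Mapping.lookup (zsc k p) x = Poly_Mapping.lookup (frag_cmul k p) x"
    by simp
qed

lemma frag_cmul_frag_of: "frag_cmul k (frag_of x) = Poly_Mapping.single x k"
  by (rule poly_mapping_eqI) (simp add: lookup_single when_def)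

lemma sum_single_eq_frag_extend:
  "(\<Sum>x\<in>Poly_Mapping.keys f. Poly_Mapping.single (\<kappa> x) (Poly_Mapping.lookup f x))
     = frag_extend (frag_of \<circ> \<kappa>) f"
  by (simp add: frag_extend_def frag_cmul_frag_of)

lemma pz_eq_frag_extend: "pz H f = frag_extend (frag_of \<circ> (\<lambda>a. cplus {a} H)) f"
  unfolding pz_def by (rule sum_single_eq_frag_extend)

lemma projc_eq_frag_extend: "projc H f = frag_extend (frag_of \<circ> (\<lambda>C. cplus C H)) f"
  unfolding projc_def by (rule sum_single_eq_frag_extend)

lemma actR_eq_frag_extend: "actR delta g f = frag_extend (frag_of \<circ> (\<lambda>C. (\<lambda>x. x + delta g) ` C)) f"
  unfolding actR_def by (rule sum_single_eq_frag_extend)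

lemma emb_eq_frag_extend: "emb f = frag_extend (frag_of \<circ> (\<lambda>a. {a})) f"
  unfolding emb_def pz_eq_frag_extend by (simp add: cplus_def)

lemma frag_extend_frag_extend:
  "frag_extend F (frag_extend G c) = frag_extend (\<lambda>a. frag_extend F (G a)) c"
  using subset_UNIV by (induction c rule: frag_induction) (auto simp: frag_extend_diff)

lemma frag_extend_fun_diff:
  "frag_extend (\<lambda>a. F a - G a) c = frag_extend F c - frag_extend G c"
proof -
  have "frag_cmul k (x - y) = frag_cmul k x - frag_cmul k y" for k and x y :: "'a \<Rightarrow>\<^sub>0 int"
    by (rule poly_mapping_eqI) (simp add: lookup_minus right_diff_distrib)
  then show ?thesis by (simp add: frag_extend_def sum_subtractf)
qed

lemma frag_extend_fun_sum:
  "frag_extend (\<lambda>a. \<Sum>j\<in>J. F j a) c = (\<Sum>j\<in>J. frag_extend (F j) c)"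
  unfolding frag_extend_def by (simp add: frag_cmul_sum sum.swap[of _ J])

lemma mult_frag_extend:
  "(p :: 'a::comm_monoid_add \<Rightarrow>\<^sub>0 int) * frag_extend F c = frag_extend (\<lambda>a. p * F a) c"
proof -
  have "p * frag_cmul k x = frag_cmul k (p * x)" for k x
    using zsc_additive_UNIV[of "\<lambda>x. p * x" k x] by (simp add: distrib_left zsc_eq_frag_cmul)
  then show ?thesis by (simp add: frag_extend_def sum_distrib_left)
qed

section \<open>Kernels of projections and products of ideals\<close>

lemma ideal_mult_0: "0 \<in> ideal_mult I J"
  unfolding ideal_mult_def by (auto intro: exI[of _ 0])

lemma ideal_mult_mult: "p \<in> I \<Longrightarrow> q \<in> J \<Longrightarrow> p * q \<in> ideal_mult I J"
  unfolding ideal_mult_def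
  by (intro CollectI exI[of _ 1] exI[of _ "\<lambda>_. p"] exI[of _ "\<lambda>_. q"]) simp

lemma ideal_mult_add:
  assumes "x \<in> ideal_mult I J" "y \<in> ideal_mult I J"
  shows "x + y \<in> ideal_mult I J"
proof -
  obtain m :: nat and p q where pq: "\<forall>i<m. p i \<in> I \<and> q i \<in> J" "x = (\<Sum>i<m. p i * q i)"
    using assms(1) unfolding ideal_mult_def by blast
  obtain n :: nat and p' q' where pq': "\<forall>i<n. p' i \<in> I \<and> q' i \<in> J" "y = (\<Sum>i<n. p' i * q' i)"
    using assms(2) unfolding ideal_mult_def by blast
  define P where "P i = (if i < m then p i else p' (i - m))" for i
  define Q where "Q i = (if i < m then q i else q' (i - m))" for i
  have "(\<Sum>i<m. P i * Q i) = x" unfolding pq(2) by (rule sum.cong) (simp_all add: P_def Q_def)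
  then have "(\<Sum>i<m + k. P i * Q i) = x + (\<Sum>i<k. p' i * q' i)" for k
    by (induction k) (simp_all add: P_def Q_def add.assoc)
  then have "x + y = (\<Sum>i<m + n. P i * Q i)" using pq'(2) by simp
  moreover have "\<forall>i<m + n. P i \<in> I \<and> Q i \<in> J"
    using pq(1) pq'(1) unfolding P_def Q_def by auto
  ultimately show ?thesis unfolding ideal_mult_def by blast
qed

lemma ideal_mult_sum:
  "finite A \<Longrightarrow> (\<And>a. a \<in> A \<Longrightarrow> x a \<in> ideal_mult I J) \<Longrightarrow> (\<Sum>a\<in>A. x a) \<in> ideal_mult I J"
  by (induction A rule: finite_induct) (auto intro: ideal_mult_0 ideal_mult_add)

lemma ideal_mult_mono: "J \<subseteq> J' \<Longrightarrow> ideal_mult I J \<subseteq> ideal_mult I J'"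
  unfolding ideal_mult_def by blast

definition add_subgroup :: "'a::ab_group_add set \<Rightarrow> bool" where
  "add_subgroup H \<longleftrightarrow> 0 \<in> H \<and> (\<forall>x\<in>H. \<forall>y\<in>H. x + y \<in> H) \<and> (\<forall>x\<in>H. - x \<in> H)"

lemma add_subgroupD:
  assumes "add_subgroup H"
  shows add_subgroup_0: "0 \<in> H"
    and add_subgroup_add: "x \<in> H \<Longrightarrow> y \<in> H \<Longrightarrow> x + y \<in> H"
    and add_subgroup_minus: "x \<in> H \<Longrightarrow> - x \<in> H"
    and add_subgroup_diff: "x \<in> H \<Longrightarrow> y \<in> H \<Longrightarrow> x - y \<in> H"
  using assms unfolding add_subgroup_def by (auto, metis diff_conv_add_uminus)

lemma mem_cplus_singleton: "t \<in> cplus {a} H \<longleftrightarrow> t - a \<in> H"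
proof
  assume "t \<in> cplus {a} H"
  then show "t - a \<in> H" unfolding cplus_def by auto
next
  assume "t - a \<in> H"
  then have "t = a + (t - a) \<and> t - a \<in> H" by simp
  then show "t \<in> cplus {a} H" unfolding cplus_def by blast
qed

lemma cplus_singleton_eq:
  assumes "add_subgroup H" "b - a \<in> H"
  shows "cplus {b} H = cplus {a} H"
proof -
  have "t - b \<in> H \<longleftrightarrow> t - a \<in> H" for t
  proof
    assume "t - b \<in> H"
    from add_subgroup_add[OF assms(1) this assms(2)] show "t - a \<in> H" by simp
  next
    assume "t - a \<in> H"
    from add_subgroup_diff[OF assms(1) this assms(2)] show "t - b \<in> H" by simp
  qed
  then show ?thesis unfolding set_eq_iff mem_cplus_singleton by blast
qed

lemma frag_extend_eq_0_if_coset_invariant: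
  assumes H: "add_subgroup H" and invariant: "\<And>a h. h \<in> H \<Longrightarrow> F (a + h) = F a"
    and "pz H f = 0"
  shows "frag_extend F f = 0"
proof -
  define G where "G C = F (SOME a. a \<in> C)" for C
  have F_factors: "F = G \<circ> (\<lambda>a. cplus {a} H)"
  proof
    fix a
    have "a \<in> cplus {a} H" using add_subgroup_0[OF H] by (simp add: mem_cplus_singleton)
    then have "(SOME t. t \<in> cplus {a} H) \<in> cplus {a} H" by (rule someI)
    then have "F (a + ((SOME t. t \<in> cplus {a} H) - a)) = F a"
      unfolding mem_cplus_singleton by (rule invariant)
    then show "F a = (G \<circ> (\<lambda>a. cplus {a} H)) a" by (simp add: G_def)
  qed
  have "frag_extend F f = frag_extend G (pz H f)"
    unfolding F_factors pz_eq_frag_extend frag_extend_compose ..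
  with assms(3) show ?thesis by simp
qed

lemma pz_frag_of: "pz H (frag_of a) = frag_of (cplus {a} H)"
  by (simp add: pz_eq_frag_extend)

lemma translation_minus_one_in_Iker:
  assumes "add_subgroup H" "u \<in> H"
  shows "frag_of u - 1 \<in> Iker H"
proof -
  have "cplus {u} H = cplus {0} H" by (rule cplus_singleton_eq) (simp_all add: assms)
  then have "pz H (frag_of u) = pz H (frag_of 0)" by (simp only: pz_frag_of)
  then show ?thesis by (simp add: Iker_def pz_eq_frag_extend frag_extend_diff)
qed

lemma add_subgroup_cplus:
  assumes N: "add_subgroup N" and H: "add_subgroup H"
  shows "add_subgroup (cplus N H)"
  unfolding add_subgroup_def cplus_def
proof (intro conjI ballI)
  show "0 \<in> {n + h |n h. n \<in> N \<and> h \<in> H}"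
    using add_subgroup_0[OF N] add_subgroup_0[OF H] by force
next
  fix x y assume "x \<in> {n + h |n h. n \<in> N \<and> h \<in> H}" "y \<in> {n + h |n h. n \<in> N \<and> h \<in> H}"
  then obtain n h n' h' where "n \<in> N" "h \<in> H" "n' \<in> N" "h' \<in> H" "x = n + h" "y = n' + h'"
    by blast
  moreover have "n + h + (n' + h') = (n + n') + (h + h')" by simp
  ultimately show "x + y \<in> {n + h |n h. n \<in> N \<and> h \<in> H}"
    using add_subgroup_add[OF N] add_subgroup_add[OF H] by blast
next
  fix x assume "x \<in> {n + h |n h. n \<in> N \<and> h \<in> H}"
  then obtain n h where "n \<in> N" "h \<in> H" "x = n + h" by blast
  moreover have "- (n + h) = - n + - h" by simp
  ultimately show "- x \<in> {n + h |n h. n \<in> N \<and> h \<in> H}"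
    using add_subgroup_minus[OF N] add_subgroup_minus[OF H] by blast
qed

lemma exists_coset_representative:
  assumes K: "add_subgroup K"
  shows "\<exists>rep. (\<forall>a. a - rep a \<in> K) \<and> (\<forall>a. \<forall>k\<in>K. rep (a + k) = rep a)"
proof (intro exI conjI allI ballI)
  define rep where "rep a = (SOME t. t \<in> cplus {a} K)" for a
  fix a
  have "a \<in> cplus {a} K" using add_subgroup_0[OF K] by (simp add: mem_cplus_singleton)
  then have "rep a \<in> cplus {a} K" unfolding rep_def by (rule someI)
  then show "a - rep a \<in> K"
    using add_subgroup_minus[OF K] by (fastforce simp: mem_cplus_singleton)
  show "rep (a + k) = rep a" if "k \<in> K" for k
    using cplus_singleton_eq[OF K, of "a + k" a] that by (simp add: rep_def)
qed

lemma exists_component_retraction: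
  assumes N: "add_subgroup N" and H: "add_subgroup H"
    and direct: "\<forall>n\<in>N. \<forall>h\<in>H. n + h = 0 \<longrightarrow> n = 0"
  shows "\<exists>u. (\<forall>a. u a \<in> N) \<and> (\<forall>a. \<forall>n\<in>N. u (a + n) = u a + n) \<and> (\<forall>a. \<forall>h\<in>H. u (a + h) = u a)"
proof -
  have K: "add_subgroup (cplus N H)" by (rule add_subgroup_cplus[OF N H])
  have N_K: "n \<in> N \<Longrightarrow> n \<in> cplus N H" and H_K: "h \<in> H \<Longrightarrow> h \<in> cplus N H" for n h
    unfolding cplus_def using add_subgroup_0[OF N] add_subgroup_0[OF H] by force+
  obtain rep where rep_in: "\<forall>a. a - rep a \<in> cplus N H"
    and rep_shift: "\<forall>a. \<forall>k\<in>cplus N H. rep (a + k) = rep a"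
    using exists_coset_representative[OF K] by blast
  have decomposed: "\<exists>n h. n \<in> N \<and> h \<in> H \<and> a - rep a = n + h" for a
    using rep_in unfolding cplus_def by blast
  \<comment> \<open>the N-component of an element of the direct sum N + H\<close>
  define comp where "comp k = (THE n. n \<in> N \<and> k - n \<in> H)" for k
  have comp_eqI: "comp k = n" if "n \<in> N" "k - n \<in> H" for k n
    unfolding comp_def
  proof (rule the_equality)
    fix n' assume n': "n' \<in> N \<and> k - n' \<in> H"
    have "(n' - n) + ((k - n') - (k - n)) = 0" by simp
    then have "n' - n = 0"
      using direct add_subgroup_diff[OF N] add_subgroup_diff[OF H] n' that by blast
    then show "n' = n" by simp
  qed (use that in simp)
  show ?thesis
  proof (intro exI[of _ "\<lambda>a. comp (a - rep a)"] conjI allI ballI)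
    fix a
    from decomposed obtain n h where nh: "n \<in> N" "h \<in> H" "a - rep a = n + h" by blast
    then show "comp (a - rep a) \<in> N" using comp_eqI by simp
    show "comp (a + n' - rep (a + n')) = comp (a - rep a) + n'" if "n' \<in> N" for n'
    proof -
      have "a + n' - rep (a + n') - (n + n') = (a - rep a) - n"
        using rep_shift N_K[OF that] by simp
      then have "comp (a + n' - rep (a + n')) = n + n'"
        using nh add_subgroup_add[OF N _ that] by (intro comp_eqI) simp_all
      then show ?thesis using comp_eqI nh by simp
    qed
    show "comp (a + h' - rep (a + h')) = comp (a - rep a)" if "h' \<in> H" for h'
    proof -
      have "a + h' - rep (a + h') - n = (a - rep a - n) + h'"
        using rep_shift H_K[OF that] by simp
      also have "\<dots> = h + h'" using nh(3) by simp
      finally have "a + h' - rep (a + h') - n \<in> H"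
        using add_subgroup_add[OF H nh(2) that] by (simp only:)
      then show ?thesis using comp_eqI nh by simp
    qed
  qed
qed

lemma kernel_decomposition:
  assumes N: "add_subgroup N" and M: "\<And>w. w \<in> S \<Longrightarrow> add_subgroup (M w)"
    and u_in: "\<And>a. u a \<in> N" and u_N: "\<And>a n. n \<in> N \<Longrightarrow> u (a + n) = u a + n"
    and u_M: "\<And>w a m. w \<in> S \<Longrightarrow> m \<in> M w \<Longrightarrow> u (a + m) = u a"
    and f_N: "pz N f = 0" and f_M: "\<And>w. w \<in> S \<Longrightarrow> pz (M w) f = 0"
  shows "f \<in> ideal_mult (Iker N) {g. \<forall>w\<in>S. pz (M w) g = 0}"
proof -
  \<comment> \<open>With a = u a + \<sigma> a: f = (\<Sum>n. ([n] - 1) g n) + (push-forward of f along \<sigma>),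
    and the push-forward vanishes since \<sigma> is N-invariant.\<close>
  define \<sigma> where "\<sigma> a = a - u a" for a
  define g where "g n = frag_extend (\<lambda>a. if u a = n then frag_of (\<sigma> a) else 0) f" for n
  have g_in: "pz (M w) (g n) = 0" if "w \<in> S" for w n
  proof -
    have "pz (M w) (g n) = frag_extend (\<lambda>a. if u a = n then frag_of (cplus {\<sigma> a} (M w)) else 0) f"
      unfolding g_def pz_eq_frag_extend frag_extend_frag_extend by (rule frag_extend_eq) simp
    also have "\<dots> = 0"
    proof (rule frag_extend_eq_0_if_coset_invariant[OF M[OF that] _ f_M[OF that]])
      fix a m assume "m \<in> M w"
      then have "cplus {\<sigma> (a + m)} (M w) = cplus {\<sigma> a} (M w)"
        using u_M[OF that] by (intro cplus_singleton_eq M that) (simp add: \<sigma>_def)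
      with \<open>m \<in> M w\<close> show "(if u (a + m) = n then frag_of (cplus {\<sigma> (a + m)} (M w)) else 0)
          = (if u a = n then frag_of (cplus {\<sigma> a} (M w)) else 0)"
        using u_M[OF that] by simp
    qed
    finally show ?thesis .
  qed
  have \<sigma>_kernel: "frag_extend (frag_of \<circ> \<sigma>) f = 0"
    by (rule frag_extend_eq_0_if_coset_invariant[OF N _ f_N]) (simp add: \<sigma>_def u_N)
  have factor: "(frag_of n - 1) * g n
      = frag_extend (\<lambda>a. if u a = n then frag_of a - frag_of (\<sigma> a) else 0) f" for n
    unfolding g_def mult_frag_extend
    by (rule frag_extend_eq) (simp add: left_diff_distrib mult_single \<sigma>_def)
  define U where "U = u ` Poly_Mapping.keys f"
  have "(\<Sum>n\<in>U. (frag_of n - 1) * g n)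
      = frag_extend (\<lambda>a. \<Sum>n\<in>U. if u a = n then frag_of a - frag_of (\<sigma> a) else 0) f"
    unfolding factor frag_extend_fun_sum ..
  also have "\<dots> = frag_extend (\<lambda>a. frag_of a - frag_of (\<sigma> a)) f"
    by (rule frag_extend_eq) (simp add: U_def)
  also have "\<dots> = frag_extend frag_of f - frag_extend (frag_of \<circ> \<sigma>) f"
    by (simp add: frag_extend_fun_diff comp_def)
  also have "\<dots> = f"
    using \<sigma>_kernel by (simp flip: frag_expansion)
  finally have f_eq: "f = (\<Sum>n\<in>U. (frag_of n - 1) * g n)" ..
  have "(\<Sum>n\<in>U. (frag_of n - 1) * g n) \<in> ideal_mult (Iker N) {g. \<forall>w\<in>S. pz (M w) g = 0}"
  proof (rule ideal_mult_sum)
    show "finite U" by (simp add: U_def)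
    show "(frag_of n - 1) * g n \<in> ideal_mult (Iker N) {g. \<forall>w\<in>S. pz (M w) g = 0}"
      if "n \<in> U" for n
      using that u_in g_in translation_minus_one_in_Iker[OF N]
      by (intro ideal_mult_mult) (auto simp: U_def)
  qed
  then show ?thesis by (subst f_eq)
qed

definition subgroup_sum :: "('i \<Rightarrow> 'n::ab_group_add set) \<Rightarrow> 'i set \<Rightarrow> 'n set" where
  "subgroup_sum N T = {\<Sum>w\<in>T. n w | n. \<forall>w\<in>T. n w \<in> N w}"

definition independent_subgroups :: "'i set \<Rightarrow> ('i \<Rightarrow> 'n::ab_group_add set) \<Rightarrow> bool" where
  "independent_subgroups V N \<longleftrightarrow> (\<forall>v\<in>V. add_subgroup (N v))
     \<and> (\<forall>n. (\<forall>v\<in>V. n v \<in> N v) \<and> (\<Sum>v\<in>V. n v) = 0 \<longrightarrow> (\<forall>v\<in>V. n v = 0))"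

lemma add_subgroup_subgroup_sum:
  assumes N: "\<And>w. w \<in> T \<Longrightarrow> add_subgroup (N w)"
  shows "add_subgroup (subgroup_sum N T)"
  unfolding add_subgroup_def subgroup_sum_def
proof (intro conjI ballI)
  show "0 \<in> {\<Sum>w\<in>T. n w |n. \<forall>w\<in>T. n w \<in> N w}"
    using add_subgroup_0[OF N] by (auto intro!: exI[of _ "\<lambda>_. 0"])
next
  fix x y assume "x \<in> {\<Sum>w\<in>T. n w |n. \<forall>w\<in>T. n w \<in> N w}" "y \<in> {\<Sum>w\<in>T. n w |n. \<forall>w\<in>T. n w \<in> N w}"
  then obtain n n' where "\<forall>w\<in>T. n w \<in> N w" "\<forall>w\<in>T. n' w \<in> N w"
    "x = (\<Sum>w\<in>T. n w)" "y = (\<Sum>w\<in>T. n' w)" by blast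
  then show "x + y \<in> {\<Sum>w\<in>T. n w |n. \<forall>w\<in>T. n w \<in> N w}"
    using add_subgroup_add[OF N] by (auto simp: sum.distrib intro!: exI[of _ "\<lambda>w. n w + n' w"])
next
  fix x assume "x \<in> {\<Sum>w\<in>T. n w |n. \<forall>w\<in>T. n w \<in> N w}"
  then obtain n where "\<forall>w\<in>T. n w \<in> N w" "x = (\<Sum>w\<in>T. n w)" by blast
  then show "- x \<in> {\<Sum>w\<in>T. n w |n. \<forall>w\<in>T. n w \<in> N w}"
    using add_subgroup_minus[OF N] by (auto simp: sum_negf intro!: exI[of _ "\<lambda>w. - n w"])
qed

lemma mem_subgroup_sum:
  assumes "finite T" "\<And>w. w \<in> T \<Longrightarrow> add_subgroup (N w)" "w \<in> T" "x \<in> N w"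
  shows "x \<in> subgroup_sum N T"
proof -
  have "x = (\<Sum>w'\<in>T. if w' = w then x else 0)" using assms(1,3) by simp
  moreover have "\<forall>w'\<in>T. (if w' = w then x else 0) \<in> N w'"
    using assms(2,4) add_subgroup_0 by auto
  ultimately show ?thesis unfolding subgroup_sum_def by blast
qed

lemma independent_subgroups_subset:
  assumes "independent_subgroups V N" "T \<subseteq> V" "finite V"
  shows "independent_subgroups T N"
  unfolding independent_subgroups_def
proof (intro conjI allI impI ballI)
  show "add_subgroup (N v)" if "v \<in> T" for v
    using assms that unfolding independent_subgroups_def by blast
next
  fix n v assume n: "(\<forall>v\<in>T. n v \<in> N v) \<and> (\<Sum>v\<in>T. n v) = 0" and "v \<in> T"
  define n' where "n' w = (if w \<in> T then n w else 0)" for w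
  have "\<forall>w\<in>V. n' w \<in> N w"
    using n assms(1) unfolding n'_def independent_subgroups_def by (auto intro: add_subgroup_0)
  moreover have "(\<Sum>w\<in>V. n' w) = 0"
    using n assms(2,3) by (simp add: n'_def sum.If_cases Int_absorb1)
  ultimately have "n' v = 0" using assms(1,2) \<open>v \<in> T\<close> unfolding independent_subgroups_def by blast
  then show "n v = 0" using \<open>v \<in> T\<close> by (simp add: n'_def)
qed

lemma independent_subgroups_direct:
  assumes indep: "independent_subgroups (insert v S) N" and "finite S" "v \<notin> S"
    and "x \<in> N v" "h \<in> subgroup_sum N S" "x + h = 0"
  shows "x = 0"
proof -
  obtain n where n: "\<forall>w\<in>S. n w \<in> N w" "h = (\<Sum>w\<in>S. n w)"
    using assms(5) unfolding subgroup_sum_def by blast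
  define n' where "n' w = (if w = v then x else n w)" for w
  have "\<forall>w\<in>insert v S. n' w \<in> N w" using n(1) assms(3,4) by (auto simp: n'_def)
  moreover have "(\<Sum>w\<in>S. n' w) = h"
    unfolding n(2) using assms(3) by (intro sum.cong) (auto simp: n'_def)
  then have "(\<Sum>w\<in>insert v S. n' w) = x + h"
    using assms(2,3) by (simp add: n'_def)
  ultimately have "\<forall>w\<in>insert v S. n' w = 0"
    using indep assms(6) unfolding independent_subgroups_def by simp
  then show ?thesis by (simp add: n'_def)
qed

lemma kernel_decomposition_independent:
  assumes indep: "independent_subgroups (insert v S) N" and S: "finite S" "v \<notin> S"
    and f: "pz (N v) f = 0" "\<forall>w\<in>S. pz (N w) f = 0"
  shows "f \<in> ideal_mult (Iker (N v)) {g. \<forall>w\<in>S. pz (N w) g = 0}"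
proof -
  have N: "add_subgroup (N w)" if "w \<in> insert v S" for w
    using indep that unfolding independent_subgroups_def by blast
  have subgroups: "add_subgroup (N v)" "add_subgroup (subgroup_sum N S)"
    using N by (auto intro: add_subgroup_subgroup_sum)
  have "\<forall>x\<in>N v. \<forall>h\<in>subgroup_sum N S. x + h = 0 \<longrightarrow> x = 0"
    using independent_subgroups_direct[OF indep S] by blast
  from exists_component_retraction[OF subgroups this] obtain u where
    u_in: "\<forall>a. u a \<in> N v" and u_N: "\<forall>a. \<forall>n\<in>N v. u (a + n) = u a + n"
    and u_S: "\<forall>a. \<forall>h\<in>subgroup_sum N S. u (a + h) = u a"
    by (elim exE conjE)
  show ?thesis
  proof (rule kernel_decomposition[where u = u])
    show "u (a + m) = u a" if "w \<in> S" "m \<in> N w" for w a m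
      using that N u_S S(1) by (simp add: mem_subgroup_sum)
  qed (use N u_in u_N f in simp_all)
qed

lemma kernels_subset_ideal_product:
  assumes "distinct vs" "independent_subgroups (set vs) N" "\<forall>v\<in>set vs. pz (N v) f = 0"
  shows "f \<in> foldr (\<lambda>v J. ideal_mult (Iker (N v)) J) vs UNIV"
  using assms
proof (induction vs arbitrary: f)
  case (Cons v vs)
  have "independent_subgroups (set vs) N"
    using Cons.prems(2) by (rule independent_subgroups_subset) auto
  then have "{g. \<forall>w\<in>set vs. pz (N w) g = 0} \<subseteq> foldr (\<lambda>v J. ideal_mult (Iker (N v)) J) vs UNIV"
    using Cons.IH Cons.prems(1) by auto
  moreover have "f \<in> ideal_mult (Iker (N v)) {g. \<forall>w\<in>set vs. pz (N w) g = 0}"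
    using Cons.prems by (intro kernel_decomposition_independent) simp_all
  ultimately have "f \<in> ideal_mult (Iker (N v)) (foldr (\<lambda>v J. ideal_mult (Iker (N v)) J) vs UNIV)"
    using ideal_mult_mono by blast
  then show ?case by simp
qed simp

lemma kernels_subset_Dideal:
  assumes "finite V" "independent_subgroups V N" "\<forall>v\<in>V. pz (N v) f = 0"
  shows "f \<in> Dideal N V"
  unfolding Dideal_def using assms by (intro kernels_subset_ideal_product) auto

lemma setting_ok_independent_subgroups:
  "setting_ok V N delta \<Longrightarrow> independent_subgroups V N"
  by (simp add: setting_ok_def independent_subgroups_def add_subgroup_def)

section \<open>Group ring actions\<close>

lemma gsmul_frag_of [simp]: "gsmul act (frag_of g) x = act g x"
  by (simp add: gsmul_def)

lemma gsmul_zero_left [simp]: "gsmul act 0 x = 0"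
  by (simp add: gsmul_def)

lemma gsmul_add_left: "gsmul act (c + c') x = gsmul act c x + gsmul act c' x"
proof -
  have expand: "gsmul act p x = (\<Sum>g\<in>A. zsc (Poly_Mapping.lookup p g) (act g x))"
    if "finite A" "Poly_Mapping.keys p \<subseteq> A" for p A
    unfolding gsmul_def using that by (intro sum.mono_neutral_left) (auto simp: in_keys_iff)
  let ?A = "Poly_Mapping.keys c \<union> Poly_Mapping.keys c'"
  have "gsmul act (c + c') x = (\<Sum>g\<in>?A. zsc (Poly_Mapping.lookup (c + c') g) (act g x))"
    by (rule expand) (auto simp: keys_add)
  also have "\<dots> = (\<Sum>g\<in>?A. zsc (Poly_Mapping.lookup c g) (act g x))
      + (\<Sum>g\<in>?A. zsc (Poly_Mapping.lookup c' g) (act g x))"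
    by (simp add: lookup_add zsc_add sum.distrib)
  also have "\<dots> = gsmul act c x + gsmul act c' x"
    by (subst (1 2) expand[of ?A]) auto
  finally show ?thesis .
qed

lemma gsmul_diff_left: "gsmul act (c - c') x = gsmul act c x - gsmul act c' x"
  using gsmul_add_left[of act "c - c'" c' x] by (simp add: algebra_simps)

lemma gsmul_sum_left: "gsmul act (\<Sum>e\<in>E. c e) x = (\<Sum>e\<in>E. gsmul act (c e) x)"
  by (induction E rule: infinite_finite_induct) (simp_all add: gsmul_add_left)

lemma gsmul_add_right:
  assumes "\<And>g x y. act g (x + y) = act g x + act g y"
  shows "gsmul act c (x + y) = gsmul act c x + gsmul act c y"
  by (simp add: gsmul_def assms zsc_add_right sum.distrib)

lemma gsmul_sum_right:
  assumes "\<And>g x y. act g (x + y) = act g x + act g y"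
  shows "gsmul act c (\<Sum>i\<in>I. x i) = (\<Sum>i\<in>I. gsmul act c (x i))"
proof (induction I rule: infinite_finite_induct)
  have "act g 0 = 0" for g using assms[of g 0 0] by simp
  then show "gsmul act c (\<Sum>i\<in>{}. x i) = (\<Sum>i\<in>{}. gsmul act c (x i))"
    and "infinite I \<Longrightarrow> gsmul act c (\<Sum>i\<in>I. x i) = (\<Sum>i\<in>I. gsmul act c (x i))" for I
    by (simp_all add: gsmul_def)
qed (simp add: gsmul_add_right[OF assms])

lemma gsmul_mult:
  fixes act :: "'g::comm_monoid_add \<Rightarrow> 'x::ab_group_add \<Rightarrow> 'x"
  assumes additive: "\<And>g x y. act g (x + y) = act g x + act g y"
    and compose: "\<And>g h x. act (g + h) x = act g (act h x)"
  shows "gsmul act (c * c') x = gsmul act c (gsmul act c' x)"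
proof -
  have act_diff: "act g (y - z) = act g y - act g z" for g y z
    using additive[of g "y - z" z] by (simp add: algebra_simps)
  have act_0: "act g 0 = 0" for g
    using additive[of g 0 0] by simp
  have frag_of_mult: "gsmul act (frag_of g * c') y = act g (gsmul act c' y)" for g y
    using subset_UNIV
  proof (induction c' arbitrary: y rule: frag_induction)
    case (one h)
    then show ?case by (simp add: mult_single compose)
  qed (simp_all add: act_0 right_diff_distrib gsmul_diff_left act_diff)
  show ?thesis
    using subset_UNIV
    by (induction c arbitrary: x rule: frag_induction)
      (simp_all add: frag_of_mult left_diff_distrib gsmul_diff_left)
qed

lemma gsmul_ringact: "gsmul ringact c y = c * (y :: 'g::comm_monoid_add \<Rightarrow>\<^sub>0 int)"
  using subset_UNIV
  by (induction c rule: frag_induction) (simp_all add: ringact_def gsmul_diff_left left_diff_distrib)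

lemma sum_fun_apply: "(\<Sum>i\<in>I. F i) x = (\<Sum>i\<in>I. F i x)"
  by (induction I rule: infinite_finite_induct) simp_all

lemma gsmul_pact: "gsmul (pact act) c y W = gsmul act c (y W)"
proof -
  have "zsc k z W = zsc k (z W)" for k and z :: "nat set \<Rightarrow> 'a"
    by (rule zsc_additive_UNIV[where F = "\<lambda>z. z W"]) simp
  then show ?thesis by (simp add: gsmul_def sum_fun_apply pact_def)
qed

lemma dv_eq_sum_superset:
  assumes "finite E" "{e \<in> B. y e \<noteq> 0} \<subseteq> E" "E \<subseteq> B" "\<And>c. gsmul act c 0 = 0"
  shows "dv act B d y e' = (\<Sum>e\<in>E. gsmul act (d e e') (y e))"
  unfolding dv_def using assms by (intro sum.mono_neutral_left) auto

lemma is_gmodD: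
  assumes "is_gmod act M"
  shows gmod_0: "0 \<in> M"
    and gmod_add: "x \<in> M \<Longrightarrow> y \<in> M \<Longrightarrow> x + y \<in> M"
    and gmod_minus: "x \<in> M \<Longrightarrow> - x \<in> M"
    and gmod_act: "x \<in> M \<Longrightarrow> act g x \<in> M"
    and gmod_act_add: "x \<in> M \<Longrightarrow> y \<in> M \<Longrightarrow> act g (x + y) = act g x + act g y"
  using assms unfolding is_gmod_def by simp_all

lemma gmod_act_0: "is_gmod act M \<Longrightarrow> act g 0 = 0"
  using gmod_act_add[of act M 0 0 g] gmod_0[of act M] by simp

lemma gmod_sum: "is_gmod act M \<Longrightarrow> (\<And>i. i \<in> I \<Longrightarrow> x i \<in> M) \<Longrightarrow> (\<Sum>i\<in>I. x i) \<in> M"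
  by (induction I rule: infinite_finite_induct) (simp_all add: gmod_0 gmod_add)

lemma gmod_zsc: "is_gmod act M \<Longrightarrow> x \<in> M \<Longrightarrow> zsc k x \<in> M"
  by (rule zsc_closed) (simp_all add: gmod_0 gmod_add gmod_minus)

lemma gmod_gsmul:
  assumes "is_gmod act M" "x \<in> M"
  shows "gsmul act c x \<in> M"
  unfolding gsmul_def using assms by (simp add: gmod_sum gmod_zsc gmod_act)

lemma gsmul_zero_right: "is_gmod act M \<Longrightarrow> gsmul act c 0 = 0"
  by (simp add: gsmul_def gmod_act_0)

lemma is_glinD:
  assumes "is_glin act1 M1 act2 M2 f"
  shows glin_mem: "x \<in> M1 \<Longrightarrow> f x \<in> M2"
    and glin_add: "x \<in> M1 \<Longrightarrow> y \<in> M1 \<Longrightarrow> f (x + y) = f x + f y"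
    and glin_act: "x \<in> M1 \<Longrightarrow> f (act1 g x) = act2 g (f x)"
  using assms unfolding is_glin_def by simp_all

lemma glin_sum:
  assumes M1: "is_gmod act1 M1" and f: "is_glin act1 M1 act2 M2 f"
  shows "(\<And>i. i \<in> I \<Longrightarrow> x i \<in> M1) \<Longrightarrow> f (\<Sum>i\<in>I. x i) = (\<Sum>i\<in>I. f (x i))"
proof (induction I rule: infinite_finite_induct)
  case (insert i I)
  have "f (x i + (\<Sum>i\<in>I. x i)) = f (x i) + f (\<Sum>i\<in>I. x i)"
    using insert.prems by (intro glin_add[OF f] gmod_sum[OF M1]) simp_all
  with insert show ?case by simp
qed (use glin_add[OF f gmod_0[OF M1] gmod_0[OF M1]] in simp_all)

lemma glin_zsc:
  assumes M1: "is_gmod act1 M1" and f: "is_glin act1 M1 act2 M2 f" and x: "x \<in> M1"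
  shows "f (zsc k x) = zsc k (f x)"
proof (rule zsc_additive[OF gmod_0[OF M1] _ _ x])
  show "\<And>x y. x \<in> M1 \<Longrightarrow> y \<in> M1 \<Longrightarrow> x + y \<in> M1" using gmod_add[OF M1] .
  show "\<And>x. x \<in> M1 \<Longrightarrow> - x \<in> M1" using gmod_minus[OF M1] .
  show "\<And>x y. x \<in> M1 \<Longrightarrow> y \<in> M1 \<Longrightarrow> f (x + y) = f x + f y" using glin_add[OF f] .
qed

lemma glin_gsmul:
  assumes M1: "is_gmod act1 M1" and f: "is_glin act1 M1 act2 M2 f" and x: "x \<in> M1"
  shows "f (gsmul act1 c x) = gsmul act2 c (f x)"
proof -
  have "f (gsmul act1 c x) = (\<Sum>g\<in>Poly_Mapping.keys c. f (zsc (Poly_Mapping.lookup c g) (act1 g x)))"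
    unfolding gsmul_def by (rule glin_sum[OF M1 f]) (rule gmod_zsc[OF M1 gmod_act[OF M1 x]])
  also have "\<dots> = gsmul act2 c (f x)"
    unfolding gsmul_def
    by (rule sum.cong) (simp_all add: glin_zsc[OF M1 f gmod_act[OF M1 x]] glin_act[OF f x])
  finally show ?thesis .
qed

lemma actR_add: "actR delta g (x + y) = actR delta g x + actR delta g y"
  by (simp add: actR_eq_frag_extend frag_extend_add)

lemma actR_compose:
  assumes "\<And>x y. delta (x + y) = delta x + delta y"
  shows "actR delta (g + h) x = actR delta g (actR delta h x)"
proof -
  have "(\<lambda>y. y + delta (g + h)) ` C = (\<lambda>y. y + delta g) ` (\<lambda>y. y + delta h) ` C" for C
    by (auto simp: assms image_image algebra_simps)
  then show ?thesis unfolding actR_eq_frag_extend frag_extend_compose by (simp add: comp_def)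
qed

lemma gsmul_actR_add:
  "gsmul (actR delta) c (x + y) = gsmul (actR delta) c x + gsmul (actR delta) c y"
  by (rule gsmul_add_right) (rule actR_add)

lemma gsmul_actR_zero: "gsmul (actR delta) c 0 = 0"
  using gsmul_actR_add[of delta c 0 0] by simp

lemma gsmul_actR_diff:
  "gsmul (actR delta) c (x - y) = gsmul (actR delta) c x - gsmul (actR delta) c y"
  using gsmul_actR_add[of delta c "x - y" y] by (simp add: algebra_simps)

lemma gsmul_actR_zsc: "gsmul (actR delta) c (zsc k x) = zsc k (gsmul (actR delta) c x)"
  by (rule zsc_additive_UNIV) (rule gsmul_actR_add)

lemma projc_add: "projc H (x + y) = projc H x + projc H y"
  by (simp add: projc_eq_frag_extend frag_extend_add)

lemma projc_diff: "projc H (x - y) = projc H x - projc H y"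
  by (simp add: projc_eq_frag_extend frag_extend_diff)

lemma projc_sum: "projc H (\<Sum>i\<in>I. x i) = (\<Sum>i\<in>I. projc H (x i))"
  by (induction I rule: infinite_finite_induct) (simp_all add: projc_add projc_eq_frag_extend frag_extend_add)

lemma projc_actR: "projc H (actR delta g x) = actR delta g (projc H x)"
proof -
  have "cplus ((\<lambda>y. y + t) ` C) H = (\<lambda>y. y + t) ` cplus C H" for C and t :: 'a
    unfolding cplus_def by (auto simp: image_iff algebra_simps) (metis add.assoc add.commute)+
  then show ?thesis
    unfolding actR_eq_frag_extend projc_eq_frag_extend frag_extend_compose by (simp add: comp_def)
qed

lemma projc_gsmul: "projc H (gsmul (actR delta) c x) = gsmul (actR delta) c (projc H x)"
proof -
  have "projc H (zsc k y) = zsc k (projc H y)" for k y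
    by (rule zsc_additive_UNIV) (rule projc_add)
  then show ?thesis by (simp add: gsmul_def projc_sum projc_actR)
qed

section \<open>Boundaries\<close>

lemma resolution_boundary_boundary:
  fixes d :: "nat \<Rightarrow> 'b \<Rightarrow> 'b \<Rightarrow> ('g::ab_group_add \<Rightarrow>\<^sub>0 int)"
  assumes fr: "free_resolution Bas d e0" and e': "e' \<in> Bas 2"
    and E: "finite E" "E \<subseteq> Bas 1" "{e. d 1 e' e \<noteq> 0} \<subseteq> E"
  shows "(\<Sum>e\<in>E. d 0 e e0 * d 1 e' e) = 0"
proof -
  have e'2: "e' \<in> Bas (Suc 1)" using e' by (simp add: numeral_2_eq_2)
  define y where "y e = d 1 e' e" for e
  have y: "y \<in> tens (Bas 1) UNIV"
    using fr e'2 unfolding free_resolution_def tens_def y_def by blast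
  define z where "z e'' = (if e'' = e' then (1 :: 'g \<Rightarrow>\<^sub>0 int) else 0)" for e''
  have z: "z \<in> tens (Bas 2) UNIV" using e' unfolding tens_def z_def by auto
  have "{e'' \<in> Bas 2. z e'' \<noteq> 0} = {e'}" using e' unfolding z_def by auto
  then have "dv ringact (Bas 2) (d 1) z = y"
    by (auto simp: dv_def gsmul_ringact z_def y_def)
  then have "dv ringact (Bas 1) (d 0) y = (\<lambda>_. 0)"
    using fr y z unfolding free_resolution_def numeral_2_eq_2 One_nat_def by blast
  then have "(\<Sum>e\<in>{e \<in> Bas 1. y e \<noteq> 0}. d 0 e e0 * y e) = 0"
    unfolding dv_def gsmul_ringact by (metis (no_types, lifting))
  moreover have "(\<Sum>e\<in>{e \<in> Bas 1. y e \<noteq> 0}. d 0 e e0 * y e) = (\<Sum>e\<in>E. d 0 e e0 * y e)"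
    using E by (intro sum.mono_neutral_left) (auto simp: y_def)
  ultimately show ?thesis unfolding y_def by simp
qed

lemma gsmul_boundary_boundary:
  fixes d :: "nat \<Rightarrow> 'b \<Rightarrow> 'b \<Rightarrow> ('g::ab_group_add \<Rightarrow>\<^sub>0 int)"
    and act :: "'g \<Rightarrow> 'x::ab_group_add \<Rightarrow> 'x"
  assumes fr: "free_resolution Bas d e0"
    and E: "finite E" "E \<subseteq> Bas 1" and E': "finite E'" "E' \<subseteq> Bas 2"
    and supp: "\<And>e'. e' \<in> E' \<Longrightarrow> {e. d 1 e' e \<noteq> 0} \<subseteq> E"
    and additive: "\<And>g x y. act g (x + y) = act g x + act g y"
    and compose: "\<And>g h x. act (g + h) x = act g (act h x)"
  shows "(\<Sum>e\<in>E. gsmul act (d 0 e e0) (\<Sum>e'\<in>E'. gsmul act (d 1 e' e) (y e'))) = 0"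
proof -
  have "(\<Sum>e\<in>E. gsmul act (d 0 e e0) (\<Sum>e'\<in>E'. gsmul act (d 1 e' e) (y e')))
      = (\<Sum>e'\<in>E'. gsmul act (\<Sum>e\<in>E. d 0 e e0 * d 1 e' e) (y e'))"
    unfolding gsmul_sum_right[OF additive] gsmul_mult[OF additive compose, symmetric]
      gsmul_sum_left
    by (rule sum.swap)
  also have "\<dots> = 0"
    using resolution_boundary_boundary[OF fr _ E] supp E' by (intro sum.neutral) auto
  finally show ?thesis .
qed

definition place_sign :: "nat set \<Rightarrow> nat \<Rightarrow> int" where
  "place_sign V v = (-1) ^ card {u \<in> V - {v}. u < v}"

lemma zsc_place_sign_twice [simp]: "zsc (place_sign V v) (zsc (place_sign V v) x) = x"
  by (simp add: place_sign_def)

lemma zsc_place_sign_diff: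
  "zsc (place_sign V v) (x - y) = zsc (place_sign V v) x - zsc (place_sign V v) y"
  by (simp add: place_sign_def)

lemma zsc_place_sign_sum:
  "zsc (place_sign V v) (\<Sum>i\<in>I. x i) = (\<Sum>i\<in>I. zsc (place_sign V v) (x i))"
  by (simp add: place_sign_def sum_negf)

lemma hdiff_remove:
  assumes "v \<in> V"
  shows "hdiff V R y (V - {v}) = zsc (place_sign V v) (R V (V - {v}) (y V))"
proof -
  have "V - (V - {v}) = {v}" "insert v (V - {v}) = V" using assms by auto
  then show ?thesis by (simp add: hdiff_def place_sign_def)
qed

lemma Hsub_remove: "v \<in> V \<Longrightarrow> Hsub N V (V - {v}) = N v"
proof -
  assume "v \<in> V"
  then have "V - (V - {v}) = {v}" by auto
  then show ?thesis unfolding Hsub_def by auto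
qed

lemma mem_translate_image: "(x :: 'a::ab_group_add) \<in> (\<lambda>y. y + t) ` S \<longleftrightarrow> x - t \<in> S"
proof
  assume "x - t \<in> S"
  then show "x \<in> (\<lambda>y. y + t) ` S" by (rule rev_image_eqI) simp
qed auto

lemma translate_cplus: "(\<lambda>y. y + t) ` cplus {a} H = cplus {a + t} H"
proof (rule set_eqI)
  fix x :: 'a
  have "x - t - a = x - (a + t)" by (simp add: algebra_simps)
  then show "x \<in> (\<lambda>y. y + t) ` cplus {a} H \<longleftrightarrow> x \<in> cplus {a + t} H"
    by (simp only: mem_translate_image mem_cplus_singleton)
qed

lemma Rc_diff: "f \<in> Rc N V W \<Longrightarrow> g \<in> Rc N V W \<Longrightarrow> f - g \<in> Rc N V W"
  unfolding Rc_def using keys_diff[of f g] by blast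

lemma Rc_sum: "(\<And>i. i \<in> I \<Longrightarrow> f i \<in> Rc N V W) \<Longrightarrow> (\<Sum>i\<in>I. f i) \<in> Rc N V W"
  unfolding Rc_def using keys_sum[of f I] by blast

lemma Rc_gsmul_actR:
  assumes "f \<in> Rc N V W"
  shows "gsmul (actR delta) c f \<in> Rc N V W"
proof -
  have actR_mem: "actR delta g f \<in> Rc N V W" for g
    unfolding Rc_def
  proof (intro CollectI ballI)
    fix D assume "D \<in> Poly_Mapping.keys (actR delta g f)"
    then obtain C where C: "C \<in> Poly_Mapping.keys f" and D: "D = (\<lambda>x. x + delta g) ` C"
      using keys_frag_extend[of "frag_of \<circ> (\<lambda>C. (\<lambda>x. x + delta g) ` C)" f]
      by (auto simp: actR_eq_frag_extend)
    obtain a where "C = cplus {a} (Hsub N V W)"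
      using C assms unfolding Rc_def by blast
    then show "\<exists>a. D = cplus {a} (Hsub N V W)" by (auto simp: D translate_cplus)
  qed
  show ?thesis
    unfolding gsmul_def zsc_eq_frag_cmul
  proof (rule Rc_sum)
    fix g
    show "frag_cmul (Poly_Mapping.lookup c g) (actR delta g f) \<in> Rc N V W"
      using actR_mem[of g] keys_cmul unfolding Rc_def by blast
  qed
qed

lemma Rc_singletons: "f \<in> Rc N V V \<Longrightarrow> C \<in> Poly_Mapping.keys f \<Longrightarrow> \<exists>a. C = {a}"
  unfolding Rc_def Hsub_def cplus_def by auto

lemma emb_frag_extend_the_elem:
  assumes "\<And>C. C \<in> Poly_Mapping.keys z \<Longrightarrow> \<exists>a. C = {a}"
  shows "emb (frag_extend (frag_of \<circ> the_elem) z) = z"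
proof -
  have "emb (frag_extend (frag_of \<circ> the_elem) z) = frag_extend ((frag_of \<circ> (\<lambda>a. {a})) \<circ> the_elem) z"
    unfolding emb_eq_frag_extend frag_extend_compose ..
  also have "\<dots> = frag_extend frag_of z"
    using assms by (intro frag_extend_eq) fastforce
  finally show ?thesis by (simp flip: frag_expansion)
qed

lemma pz_eq_projc_emb: "pz H f = projc H (emb f)"
  unfolding projc_eq_frag_extend emb_eq_frag_extend frag_extend_compose pz_eq_frag_extend
  by (simp add: comp_def)

section \<open>The defect of a compatible system\<close>

locale shintani_compatible_system =
  fixes V :: "nat set" and N :: "nat \<Rightarrow> 'n::ab_group_add set" and delta :: "'g::ab_group_add \<Rightarrow> 'n"
    and Bas :: "nat \<Rightarrow> 'b set" and d :: "nat \<Rightarrow> 'b \<Rightarrow> 'b \<Rightarrow> ('g \<Rightarrow>\<^sub>0 int)" and e0 :: 'b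
    and act :: "'g \<Rightarrow> 'm::ab_group_add \<Rightarrow> 'm" and Fc :: "nat set \<Rightarrow> 'm set"
    and res :: "nat set \<Rightarrow> nat set \<Rightarrow> 'm \<Rightarrow> 'm" and phi :: "nat set \<Rightarrow> 'm \<Rightarrow> ('n set \<Rightarrow>\<^sub>0 int)"
    and xbar :: 'm and a :: "nat \<Rightarrow> 'b \<Rightarrow> nat set \<Rightarrow> 'm"
    and b :: "nat \<Rightarrow> 'b \<Rightarrow> nat set \<Rightarrow> ('n set \<Rightarrow>\<^sub>0 int)"
  assumes setting: "setting_ok V N delta"
    and resolution: "free_resolution Bas d e0"
    and datum: "shintani_datum V N delta Bas d act Fc res phi xbar"
    and compatible: "compatible_system V N delta Bas d e0 act Fc res phi xbar a b"
begin

lemma finite_V: "finite V"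
  using setting by (simp add: setting_ok_def)

lemma delta_add: "delta (x + y) = delta x + delta y"
  using setting by (simp add: setting_ok_def)

lemma Fc_module: "W \<subseteq> V \<Longrightarrow> is_gmod act (Fc W)"
  using datum by (simp add: shintani_datum_def functor_ok_def)

lemma res_linear: "W \<subseteq> V \<Longrightarrow> is_glin act (Fc V) act (Fc W) (res V W)"
  using datum by (simp add: shintani_datum_def functor_ok_def)

lemma phi_linear: "W \<subseteq> V \<Longrightarrow> is_glin act (Fc W) (actR delta) (Rc N V W) (phi W)"
  using datum by (simp add: shintani_datum_def nat_trans_ok_def)

lemma phi_natural: "W \<subseteq> V \<Longrightarrow> y \<in> Fc V \<Longrightarrow> phi W (res V W y) = resR N V V W (phi V y)"
  using datum by (simp add: shintani_datum_def nat_trans_ok_def)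

lemma a_mem: "j \<le> card V \<Longrightarrow> a j \<in> tens (Bas j) (dsumk V Fc (card V - j))"
  using compatible by (simp add: compatible_system_def Let_def)

lemma b_mem: "1 \<le> j \<Longrightarrow> j \<le> card V + 1 \<Longrightarrow> b j \<in> tens (Bas j) (dsumk V (Rc N V) (card V + 1 - j))"
  using compatible by (simp add: compatible_system_def Let_def)

lemma a_boundary_Suc:
  "j < card V \<Longrightarrow> dv (pact act) (Bas (Suc j)) (d j) (a (Suc j)) = (\<lambda>e. hdiff V res (a j e))"
  using compatible by (simp add: compatible_system_def Let_def)

lemma b_boundary_Suc:
  "1 \<le> j \<Longrightarrow> j \<le> card V \<Longrightarrow> (\<lambda>e. hdiff V (resR N V) (b j e))
     = (\<lambda>e W. phik V phi (a j e) W - dv (pact (actR delta)) (Bas (Suc j)) (d j) (b (Suc j)) e W)"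
  using compatible by (simp add: compatible_system_def Let_def)

lemma card_V_pos: "V \<noteq> {} \<Longrightarrow> 0 < card V"
  using finite_V by (simp add: card_gt_0_iff)

lemma a1_boundary:
  "V \<noteq> {} \<Longrightarrow> dv (pact act) (Bas 1) (d 0) (a 1) = (\<lambda>e. hdiff V res (a 0 e))"
  using a_boundary_Suc[of 0] card_V_pos by simp

lemma b1_boundary:
  "V \<noteq> {} \<Longrightarrow> (\<lambda>e. hdiff V (resR N V) (b 1 e))
     = (\<lambda>e W. phik V phi (a 1 e) W - dv (pact (actR delta)) (Bas 2) (d 1) (b 2) e W)"
  using b_boundary_Suc[of 1] card_V_pos by (simp add: Suc_leI numeral_2_eq_2)

lemma a0_mem: "a 0 e0 V \<in> Fc V"
  using a_mem[of 0] by (simp add: tens_def dsumk_def)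

lemma a1_mem:
  assumes "v \<in> V"
  shows "a 1 e (V - {v}) \<in> Fc (V - {v})"
proof -
  have "0 < card V" using assms card_V_pos by blast
  moreover have "card (V - {v}) = card V - 1" using assms finite_V by simp
  ultimately have "1 \<le> card V" "card (V - {v}) = card V - 1" by simp_all
  then show ?thesis using a_mem[of 1] by (simp add: tens_def dsumk_def)
qed

lemma b1_mem: "b 1 e V \<in> Rc N V V"
  using b_mem[of 1] by (simp add: tens_def dsumk_def)

definition supp2 :: "'b set" where
  "supp2 = {e' \<in> Bas 2. b 2 e' \<noteq> 0}"

\<comment> \<open>one finite index set over which all level-1 sums of the argument can be taken\<close>
definition supp1 :: "'b set" where
  "supp1 = {e \<in> Bas 1. a 1 e \<noteq> 0 \<or> b 1 e \<noteq> 0} \<union> (\<Union>e'\<in>supp2. {e. d 1 e' e \<noteq> 0})"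

lemma supp2_subset: "supp2 \<subseteq> Bas 2"
  by (auto simp: supp2_def)

lemma resolution_row: "e' \<in> Bas 2 \<Longrightarrow> finite {e. d 1 e' e \<noteq> 0} \<and> {e. d 1 e' e \<noteq> 0} \<subseteq> Bas 1"
  using resolution unfolding free_resolution_def numeral_2_eq_2 by auto

lemma supp1_subset: "supp1 \<subseteq> Bas 1"
  using resolution_row supp2_subset by (auto simp: supp1_def)

lemma finite_supp:
  assumes "V \<noteq> {}"
  shows "finite supp2" "finite supp1"
proof -
  have "1 \<le> card V" using card_V_pos[OF assms] by simp
  then have "finite {e. a 1 e \<noteq> 0}" "finite {e. b 1 e \<noteq> 0}" "finite {e. b 2 e \<noteq> 0}"
    using a_mem[of 1] b_mem[of 1] b_mem[of 2] by (simp_all add: tens_def)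
  then show "finite supp2" "finite supp1"
    using resolution_row supp2_subset
    by (auto simp: supp2_def supp1_def intro: rev_finite_subset)
qed

lemma gsmul_pact_act_zero: "gsmul (pact act) c 0 = 0"
  by (rule ext) (simp add: gsmul_pact gsmul_zero_right[OF Fc_module[of V]])

lemma gsmul_pact_actR_zero: "gsmul (pact (actR delta)) c 0 = 0"
  by (rule ext) (simp add: gsmul_pact gsmul_actR_zero)

lemma dv_a1_apply:
  assumes "V \<noteq> {}"
  shows "dv (pact act) (Bas 1) (d 0) (a 1) e0 W = (\<Sum>e\<in>supp1. gsmul act (d 0 e e0) (a 1 e W))"
proof -
  have "{e \<in> Bas 1. a 1 e \<noteq> 0} \<subseteq> supp1" by (auto simp: supp1_def)
  from dv_eq_sum_superset[OF finite_supp(2)[OF assms] this supp1_subset gsmul_pact_act_zero]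
  show ?thesis by (simp add: sum_fun_apply gsmul_pact)
qed

lemma dv_b1_apply:
  assumes "V \<noteq> {}"
  shows "dv (pact (actR delta)) (Bas 1) (d 0) (b 1) e0 W
     = (\<Sum>e\<in>supp1. gsmul (actR delta) (d 0 e e0) (b 1 e W))"
proof -
  have "{e \<in> Bas 1. b 1 e \<noteq> 0} \<subseteq> supp1" by (auto simp: supp1_def)
  from dv_eq_sum_superset[OF finite_supp(2)[OF assms] this supp1_subset gsmul_pact_actR_zero]
  show ?thesis by (simp add: sum_fun_apply gsmul_pact)
qed

lemma dv_b2_apply:
  assumes "V \<noteq> {}"
  shows "dv (pact (actR delta)) (Bas 2) (d 1) (b 2) e W
     = (\<Sum>e'\<in>supp2. gsmul (actR delta) (d 1 e' e) (b 2 e' W))"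
proof -
  have "{e' \<in> Bas 2. b 2 e' \<noteq> 0} \<subseteq> supp2" by (simp add: supp2_def)
  from dv_eq_sum_superset[OF finite_supp(1)[OF assms] this supp2_subset gsmul_pact_actR_zero]
  show ?thesis by (simp add: sum_fun_apply gsmul_pact)
qed

lemma res_a0_remove:
  assumes v: "v \<in> V"
  shows "zsc (place_sign V v) (res V (V - {v}) (a 0 e0 V))
    = (\<Sum>e\<in>supp1. gsmul act (d 0 e e0) (a 1 e (V - {v})))"
proof -
  have V: "V \<noteq> {}" using v by blast
  have "zsc (place_sign V v) (res V (V - {v}) (a 0 e0 V)) = hdiff V res (a 0 e0) (V - {v})"
    by (rule hdiff_remove[OF v, symmetric])
  also have "\<dots> = dv (pact act) (Bas 1) (d 0) (a 1) e0 (V - {v})"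
    by (rule fun_cong[OF fun_cong[OF a1_boundary[OF V]], symmetric])
  also have "\<dots> = (\<Sum>e\<in>supp1. gsmul act (d 0 e e0) (a 1 e (V - {v})))"
    by (rule dv_a1_apply[OF V])
  finally show ?thesis .
qed

lemma projc_b1_remove:
  assumes v: "v \<in> V"
  shows "zsc (place_sign V v) (projc (N v) (b 1 e V))
    = phi (V - {v}) (a 1 e (V - {v})) - (\<Sum>e'\<in>supp2. gsmul (actR delta) (d 1 e' e) (b 2 e' (V - {v})))"
proof -
  have V: "V \<noteq> {}" using v by blast
  have "zsc (place_sign V v) (projc (N v) (b 1 e V)) = hdiff V (resR N V) (b 1 e) (V - {v})"
    by (simp add: hdiff_remove[OF v] resR_def Hsub_remove[OF v])
  also have "\<dots> = phik V phi (a 1 e) (V - {v}) - dv (pact (actR delta)) (Bas 2) (d 1) (b 2) e (V - {v})"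
    by (rule fun_cong[OF fun_cong[OF b1_boundary[OF V]]])
  also have "\<dots> = phi (V - {v}) (a 1 e (V - {v}))
      - (\<Sum>e'\<in>supp2. gsmul (actR delta) (d 1 e' e) (b 2 e' (V - {v})))"
    by (simp add: phik_def dv_b2_apply[OF V] del: One_nat_def)
  finally show ?thesis .
qed

lemma projc_phi_a0_remove:
  assumes v: "v \<in> V"
  shows "zsc (place_sign V v) (projc (N v) (phi V (a 0 e0 V)))
    = (\<Sum>e\<in>supp1. gsmul (actR delta) (d 0 e e0) (phi (V - {v}) (a 1 e (V - {v}))))"
proof -
  let ?W = "V - {v}"
  have W: "?W \<subseteq> V" by blast
  note lin = Fc_module[OF W] phi_linear[OF W]
  have "projc (N v) (phi V (a 0 e0 V)) = phi ?W (res V ?W (a 0 e0 V))"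
    using phi_natural[OF W a0_mem] v by (simp add: resR_def Hsub_remove)
  then have "zsc (place_sign V v) (projc (N v) (phi V (a 0 e0 V)))
      = phi ?W (zsc (place_sign V v) (res V ?W (a 0 e0 V)))"
    using glin_zsc[OF lin glin_mem[OF res_linear[OF W] a0_mem]] by simp
  also have "\<dots> = (\<Sum>e\<in>supp1. phi ?W (gsmul act (d 0 e e0) (a 1 e ?W)))"
    unfolding res_a0_remove[OF v]
    by (rule glin_sum[OF lin]) (rule gmod_gsmul[OF Fc_module[OF W] a1_mem[OF v]])
  also have "\<dots> = (\<Sum>e\<in>supp1. gsmul (actR delta) (d 0 e e0) (phi ?W (a 1 e ?W)))"
    by (rule sum.cong) (simp_all add: glin_gsmul[OF lin a1_mem[OF v]] del: One_nat_def)
  finally show ?thesis .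
qed

lemma projc_defect_eq_0:
  assumes v: "v \<in> V"
  shows "projc (N v) (phi V (a 0 e0 V) - dv (pact (actR delta)) (Bas 1) (d 0) (b 1) e0 V) = 0"
proof -
  let ?W = "V - {v}" and ?s = "place_sign V v"
  have V: "V \<noteq> {}" using v by blast
  have "zsc ?s (projc (N v) (phi V (a 0 e0 V) - dv (pact (actR delta)) (Bas 1) (d 0) (b 1) e0 V))
      = zsc ?s (projc (N v) (phi V (a 0 e0 V)))
        - (\<Sum>e\<in>supp1. gsmul (actR delta) (d 0 e e0) (zsc ?s (projc (N v) (b 1 e V))))"
    by (simp add: dv_b1_apply[OF V] projc_diff projc_sum projc_gsmul zsc_place_sign_diff
        zsc_place_sign_sum gsmul_actR_zsc del: One_nat_def)
  also have "\<dots> = (\<Sum>e\<in>supp1. gsmul (actR delta) (d 0 e e0)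
      (\<Sum>e'\<in>supp2. gsmul (actR delta) (d 1 e' e) (b 2 e' ?W)))"
    by (simp add: projc_phi_a0_remove[OF v] projc_b1_remove[OF v] gsmul_actR_diff sum_subtractf
        del: One_nat_def)
  also have "\<dots> = 0"
    using finite_supp[OF V] supp1_subset supp2_subset
    by (intro gsmul_boundary_boundary[OF resolution] actR_add actR_compose delta_add)
      (auto simp: supp1_def)
  finally show ?thesis by (metis zsc_place_sign_twice zsc_zero_right)
qed

lemma defect_mem_Rc:
  "phi V (a 0 e0 V) - dv (pact (actR delta)) (Bas 1) (d 0) (b 1) e0 V \<in> Rc N V V"
  unfolding dv_def sum_fun_apply gsmul_pact
  by (intro Rc_diff Rc_sum Rc_gsmul_actR b1_mem glin_mem[OF phi_linear a0_mem]) simp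

end

theorem proposition1p7:
  fixes V :: "nat set" and N :: "nat \<Rightarrow> 'n::ab_group_add set" and delta :: "'g::ab_group_add \<Rightarrow> 'n"
    and Bas :: "nat \<Rightarrow> 'b set" and d :: "nat \<Rightarrow> 'b \<Rightarrow> 'b \<Rightarrow> ('g \<Rightarrow>\<^sub>0 int)" and e0 :: 'b
    and act :: "'g \<Rightarrow> 'm::ab_group_add \<Rightarrow> 'm" and Fc :: "nat set \<Rightarrow> 'm set"
    and res :: "nat set \<Rightarrow> nat set \<Rightarrow> 'm \<Rightarrow> 'm" and phi :: "nat set \<Rightarrow> 'm \<Rightarrow> ('n set \<Rightarrow>\<^sub>0 int)"
    and xbar :: 'm and a :: "nat \<Rightarrow> 'b \<Rightarrow> nat set \<Rightarrow> 'm"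
    and b :: "nat \<Rightarrow> 'b \<Rightarrow> nat set \<Rightarrow> ('n set \<Rightarrow>\<^sub>0 int)"
  assumes "setting_ok V N delta"
    and "free_resolution Bas d e0"
    and "shintani_datum V N delta Bas d act Fc res phi xbar"
    and "compatible_system V N delta Bas d e0 act Fc res phi xbar a b"
  shows "\<exists>f\<in>Dideal N V.
           emb f = phi V (a 0 e0 V) - dv (pact (actR delta)) (Bas 1) (d 0) (b 1) e0 V"
proof -
  interpret shintani_compatible_system V N delta Bas d e0 act Fc res phi xbar a b
    using assms by unfold_locales
  define z where "z = phi V (a 0 e0 V) - dv (pact (actR delta)) (Bas 1) (d 0) (b 1) e0 V"
  define f where "f = frag_extend (frag_of \<circ> the_elem) z"
  have "emb f = z"
    unfolding f_def using Rc_singletons[OF defect_mem_Rc[folded z_def]]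
    by (rule emb_frag_extend_the_elem)
  moreover have "f \<in> Dideal N V"
  proof (rule kernels_subset_Dideal[OF finite_V setting_ok_independent_subgroups[OF setting]])
    show "\<forall>v\<in>V. pz (N v) f = 0"
      using projc_defect_eq_0 by (simp add: pz_eq_projc_emb \<open>emb f = z\<close> z_def)
  qed
  ultimately show ?thesis unfolding z_def by blast
qed

end
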